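(* Let $N\ge1$, $\alpha\in\mathbb{C}$, and $u_0,\ldots,u_N\in\mathbb{C}$ with $u_j\notin\Lambda_\tau$ and $u_j+\alpha\tau\notin\Lambda_\tau$ for all $j$. Put $u=u_0+\cdots+u_N$. Then $$e^{2\pi i\alpha u}q^{\alpha^2(N+1)/2}\,\hat\mu_N(-\alpha\tau-u_0,\ldots,-\alpha\tau-u_N;\alpha+1;\tau)=\frac{(-1)^{N+1}\vartheta(u_0)\cdots\vartheta(u_N)}{\vartheta(u_0+\alpha\tau)\cdots\vartheta(u_N+\alpha\tau)}\,\hat\mu_N(u_0,\ldots,u_N;\alpha+1;\tau),$$ where $q^{\alpha^2(N+1)/2}:=e^{\pi i\alpha^2(N+1)\tau}$.
   Context: Fix $\tau$ with $\operatorname{Im}\tau>0$, $q=e^{2\pi i\tau}$, $\Lambda_\tau=\mathbb{Z}+\tau\mathbb{Z}$, $q^\beta:=e^{2\pi i\beta\tau}$. $(x;q)_\infty=\prod_{j\ge0}(1-xq^j)$. $\vartheta(u)=\vartheta(u;\tau)=-ie^{-\pi iu}q^{1/8}(q;q)_\infty(e^{2\pi iu};q)_\infty(qe^{-2\pi iu};q)_\infty$. For $n\in\mathbb{Z}^N$, $|n|=n_1+\cdots+n_N$. The multivariable generalized $\mu$-function is $$\hat\mu_N(u_0,\ldots,u_N;\beta;\tau)=e^{\pi i(\beta-1)u}\sum_{n\in\mathbb{Z}^N}\frac{e^{\pi iu_0}\,(e^{2\pi iu_0}q^{\beta+|n|};q)_\infty}{(e^{2\pi iu_0}q^{|n|};q)_\infty}\prod_{j=1}^N\frac{(-1)^{n_j}e^{-2\pi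 in_ju_j}q^{n_j(n_j+1)/2}}{\vartheta(u_j;\tau)},\quad u=u_0+\cdots+u_N,$$ defined for $u_0,\ldots,u_N\notin\Lambda_\tau$. *)

theory Defs
  imports "HOL-Analysis.Analysis"
begin

definition nome :: "complex \<Rightarrow> complex" where
  "nome \<tau> = exp (2 * pi * \<i> * \<tau>)"

definition qpow :: "complex \<Rightarrow> complex \<Rightarrow> complex" where
  "qpow \<tau> \<beta> = exp (2 * pi * \<i> * \<beta> * \<tau>)"

definition qpoch :: "complex \<Rightarrow> complex \<Rightarrow> complex" where
  "qpoch x q = (\<Prod>j. 1 - x * q ^ j)"

definition lattice :: "complex \<Rightarrow> complex set" where
  "lattice \<tau> = {of_int m + of_int n * \<tau> | m n. True}"

definition theta :: "complex \<Rightarrow> complex \<Rightarrow> complex" where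
  "theta u \<tau> = - \<i> * exp (- pi * \<i> * u) * qpow \<tau> (1/8) *
     qpoch (nome \<tau>) (nome \<tau>) * qpoch (exp (2 * pi * \<i> * u)) (nome \<tau>) *
     qpoch (nome \<tau> * exp (- 2 * pi * \<i> * u)) (nome \<tau>)"

text \<open>Index set Z^N, realised as integer functions supported on {1..N}.\<close>
definition intvecs :: "nat \<Rightarrow> (nat \<Rightarrow> int) set" where
  "intvecs N = {n. \<forall>j. j \<notin> {1..N} \<longrightarrow> n j = 0}"

definition muhat :: "nat \<Rightarrow> (nat \<Rightarrow> complex) \<Rightarrow> complex \<Rightarrow> complex \<Rightarrow> complex" where
  "muhat N u \<beta> \<tau> =
     exp (pi * \<i> * (\<beta> - 1) * (\<Sum>j\<le>N. u j)) *
     (\<Sum>\<^sub>\<infinity>n\<in>intvecs N.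
        exp (pi * \<i> * u 0) *
        qpoch (exp (2 * pi * \<i> * u 0) * qpow \<tau> (\<beta> + of_int (\<Sum>j=1..N. n j))) (nome \<tau>) /
        qpoch (exp (2 * pi * \<i> * u 0) * qpow \<tau> (of_int (\<Sum>j=1..N. n j))) (nome \<tau>) *
        (\<Prod>j=1..N. (-1) powi (n j) * exp (- 2 * pi * \<i> * of_int (n j) * u j) *
                     qpow \<tau> (of_int (n j * (n j + 1)) / 2) / theta (u j) \<tau>))"

end

theory Submission
  imports Defs
begin

(* Negating the summation index, n |-> -n, and substituting u_j |-> -alpha tau - u_j turns each
   summand of mu into a fixed multiple of the corresponding original summand. For j >= 1 this is
   the oddness of theta. In the u_0-factor, the product formula
   theta(z) ~ e^(-pi i z) (e(z);q)_oo (q/e(z);q)_oo turns the quotient of q-products into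
   theta(u_0 + m tau) / theta(u_0 + alpha tau + (m+1) tau) up to exponentials, where m = |n|, and
   quasi-periodicity theta(z + tau) = -e^(-pi i tau - 2 pi i z) theta(z) brings it back to
   theta(u_0) / theta(u_0 + alpha tau). The powers q^(-(alpha+1) n_j) produced by the factors
   j >= 1 cancel the one produced by the u_0-factor. *)

definition e2pi :: "complex \<Rightarrow> complex" where
  "e2pi z = exp (2 * pi * \<i> * z)"

definition qprod :: "complex \<Rightarrow> complex \<Rightarrow> complex" where
  "qprod \<tau> z = qpoch (e2pi z) (e2pi \<tau>)"

lemma e2pi_add: "e2pi (a + b) = e2pi a * e2pi b"
  unfolding e2pi_def by (simp add: distrib_left exp_add)

lemma e2pi_power: "e2pi a ^ n = e2pi (of_nat n * a)"
  unfolding e2pi_def by (simp add: exp_of_nat_mult[symmetric] mult_ac)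

lemma e2pi_sum: "e2pi (\<Sum>j\<in>A. f j) = (\<Prod>j\<in>A. e2pi (f j))"
  unfolding e2pi_def by (cases "finite A") (simp_all add: sum_distrib_left exp_sum)

lemma norm_e2pi_less_1: "Im \<tau> > 0 \<Longrightarrow> norm (e2pi \<tau>) < 1"
  unfolding e2pi_def by simp

lemma nome_eq_e2pi: "nome \<tau> = e2pi \<tau>"
  unfolding nome_def e2pi_def ..

lemma exp_times_qpow: "exp (2 * pi * \<i> * z) * qpow \<tau> c = e2pi (z + c * \<tau>)"
  unfolding e2pi_def qpow_def by (simp add: exp_add[symmetric] algebra_simps)

lemma mem_lattice_iff: "z \<in> lattice \<tau> \<longleftrightarrow> (\<exists>m n::int. z = of_int m + of_int n * \<tau>)"
  unfolding lattice_def by auto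

lemma int_mem_lattice: "of_int m \<in> lattice \<tau>"
  unfolding mem_lattice_iff by (rule exI[of _ m], rule exI[of _ 0]) simp

lemma uminus_mem_lattice_iff: "- z \<in> lattice \<tau> \<longleftrightarrow> z \<in> lattice \<tau>"
proof -
  have "- z \<in> lattice \<tau>" if "z \<in> lattice \<tau>" for z
  proof -
    from that obtain m n where "z = of_int m + of_int n * \<tau>" by (auto simp: mem_lattice_iff)
    then have "- z = of_int (- m) + of_int (- n) * \<tau>" by simp
    then show ?thesis unfolding mem_lattice_iff by blast
  qed
  from this[of z] this[of "- z"] show ?thesis by auto
qed

lemma add_int_tau_mem_lattice_iff: "z + of_int k * \<tau> \<in> lattice \<tau> \<longleftrightarrow> z \<in> lattice \<tau>"
proof -
  have "z + of_int k * \<tau> \<in> lattice \<tau>" if "z \<in> lattice \<tau>" for z k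
  proof -
    from that obtain m n where "z = of_int m + of_int n * \<tau>" by (auto simp: mem_lattice_iff)
    then have "z + of_int k * \<tau> = of_int m + of_int (n + k) * \<tau>" by (simp add: algebra_simps)
    then show ?thesis unfolding mem_lattice_iff by blast
  qed
  from this[of z k] this[of "z + of_int k * \<tau>" "- k"] show ?thesis by auto
qed

lemma e2pi_ne_1: "z \<notin> lattice \<tau> \<Longrightarrow> e2pi z \<noteq> 1"
proof
  assume "z \<notin> lattice \<tau>" "e2pi z = 1"
  then have "Re (2 * pi * \<i> * z) = 0 \<and> (\<exists>n::int. Im (2 * pi * \<i> * z) = of_int (2 * n) * pi)"
    unfolding e2pi_def exp_eq_1 by simp
  then obtain n :: int where "Im z = 0" "Re z = of_int n" by auto
  then have "z = of_int n" by (simp add: complex_eq_iff)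
  with \<open>z \<notin> lattice \<tau>\<close> show False by (simp add: int_mem_lattice)
qed

lemma convergent_prod_qpoch: "norm (q::complex) < 1 \<Longrightarrow> convergent_prod (\<lambda>j. 1 - x * q ^ j)"
proof -
  assume q: "norm q < 1"
  have "summable (\<lambda>j. norm x * norm q ^ j)"
    using q by (intro summable_mult summable_geometric) simp
  then have "summable (\<lambda>j. norm ((1 - x * q ^ j) - 1))"
    by (simp add: norm_mult norm_power)
  then show ?thesis
    by (intro abs_convergent_prod_imp_convergent_prod summable_imp_abs_convergent_prod)
qed

lemma qpoch_shift:
  assumes "norm (q::complex) < 1" "x \<noteq> 1"
  shows "qpoch x q = (1 - x) * qpoch (x * q) q"
proof -
  have "(\<Prod>j. 1 - x * q ^ Suc j) = (\<Prod>j. 1 - x * q ^ j) / (1 - x * q ^ 0)"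
    by (rule prodinf_split_head[OF convergent_prod_qpoch[OF assms(1)]]) (use assms(2) in simp)
  then show ?thesis using assms(2) unfolding qpoch_def by (simp add: mult_ac)
qed

lemma qpoch_nonzero:
  "norm (q::complex) < 1 \<Longrightarrow> (\<And>j. x * q ^ j \<noteq> 1) \<Longrightarrow> qpoch x q \<noteq> 0"
  unfolding qpoch_def by (rule prodinf_nonzero[OF convergent_prod_qpoch]) auto

lemma qprod_shift:
  assumes "Im \<tau> > 0" "z \<notin> lattice \<tau>"
  shows "qprod \<tau> z = (1 - e2pi z) * qprod \<tau> (z + \<tau>)"
  unfolding qprod_def e2pi_add
  using qpoch_shift[OF norm_e2pi_less_1[OF assms(1)] e2pi_ne_1[OF assms(2)]] .

lemma qprod_nonzero:
  assumes "Im \<tau> > 0" "z \<notin> lattice \<tau>"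
  shows "qprod \<tau> z \<noteq> 0"
  unfolding qprod_def
proof (rule qpoch_nonzero[OF norm_e2pi_less_1[OF assms(1)]])
  fix j :: nat
  have "z + of_int (int j) * \<tau> \<notin> lattice \<tau>"
    using assms(2) by (simp only: add_int_tau_mem_lattice_iff not_False_eq_True)
  then show "e2pi z * e2pi \<tau> ^ j \<noteq> 1"
    using e2pi_ne_1 by (simp add: e2pi_power e2pi_add[symmetric])
qed

lemma qprod_self_nonzero: "Im \<tau> > 0 \<Longrightarrow> qprod \<tau> \<tau> \<noteq> 0"
  unfolding qprod_def
proof (rule qpoch_nonzero[OF norm_e2pi_less_1])
  fix j :: nat
  assume "Im \<tau> > 0"
  then have "norm (e2pi \<tau>) ^ Suc j < 1"
    by (intro power_Suc_less_one) (simp_all add: e2pi_def norm_e2pi_less_1)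
  then show "e2pi \<tau> * e2pi \<tau> ^ j \<noteq> 1"
    by (metis norm_one norm_power order.irrefl power_Suc)
qed

lemma theta_eq_qprod:
  "theta z \<tau> = - \<i> * exp (- pi * \<i> * z) * qpow \<tau> (1/8) * qprod \<tau> \<tau> * qprod \<tau> z * qprod \<tau> (\<tau> - z)"
proof -
  have "nome \<tau> * exp (- 2 * pi * \<i> * z) = e2pi (\<tau> - z)"
    unfolding nome_def e2pi_def by (simp add: exp_add[symmetric] algebra_simps)
  then show ?thesis unfolding theta_def qprod_def by (simp add: nome_eq_e2pi e2pi_def)
qed

lemma theta_nonzero:
  assumes "Im \<tau> > 0" "z \<notin> lattice \<tau>"
  shows "theta z \<tau> \<noteq> 0"
proof -
  have "- z + of_int 1 * \<tau> \<notin> lattice \<tau>"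
    using assms(2) by (simp only: add_int_tau_mem_lattice_iff uminus_mem_lattice_iff not_False_eq_True)
  then show ?thesis
    using assms qprod_nonzero qprod_self_nonzero
    by (simp add: theta_eq_qprod qpow_def)
qed

lemma theta_minus:
  assumes "Im \<tau> > 0" "z \<notin> lattice \<tau>"
  shows "theta (- z) \<tau> = - theta z \<tau>"
proof -
  define C where "C = - \<i> * qpow \<tau> (1/8) * qprod \<tau> \<tau> * qprod \<tau> (\<tau> - z) * qprod \<tau> (\<tau> + z)"
  have Qmz: "qprod \<tau> (- z) = (1 - e2pi (- z)) * qprod \<tau> (\<tau> - z)"
    using qprod_shift[OF assms(1), of "- z"] assms(2) by (simp add: uminus_mem_lattice_iff)
  have Qz: "qprod \<tau> z = (1 - e2pi z) * qprod \<tau> (\<tau> + z)"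
    using qprod_shift[OF assms] by (simp add: add.commute)
  have "exp (pi * \<i> * z) * e2pi (- z) = exp (- pi * \<i> * z)"
    "exp (- pi * \<i> * z) * e2pi z = exp (pi * \<i> * z)"
    unfolding e2pi_def exp_add[symmetric] by (simp_all add: algebra_simps)
  then have sign: "exp (pi * \<i> * z) * (1 - e2pi (- z)) = - (exp (- pi * \<i> * z) * (1 - e2pi z))"
    by (simp add: algebra_simps)
  have "theta (- z) \<tau> = C * (exp (pi * \<i> * z) * (1 - e2pi (- z)))"
    unfolding theta_eq_qprod Qmz C_def by (simp add: ac_simps)
  also have "\<dots> = - (C * (exp (- pi * \<i> * z) * (1 - e2pi z)))"
    unfolding sign by simp
  also have "C * (exp (- pi * \<i> * z) * (1 - e2pi z)) = theta z \<tau>"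
    unfolding theta_eq_qprod Qz C_def by (simp add: ac_simps)
  finally show ?thesis .
qed

lemma theta_plus_tau:
  assumes "Im \<tau> > 0" "z \<notin> lattice \<tau>"
  shows "theta (z + \<tau>) \<tau> = exp (pi * \<i> * (1 - \<tau> - 2 * z)) * theta z \<tau>"
proof -
  define C where "C = - \<i> * exp (- pi * \<i> * z) * qpow \<tau> (1/8) * qprod \<tau> \<tau> * qprod \<tau> (z + \<tau>) * qprod \<tau> (\<tau> - z)"
  have Qmz: "qprod \<tau> (- z) = (1 - e2pi (- z)) * qprod \<tau> (\<tau> - z)"
    using qprod_shift[OF assms(1), of "- z"] assms(2) by (simp add: uminus_mem_lattice_iff)
  have "exp (pi * \<i> * (1 - \<tau> - 2 * z)) = exp (pi * \<i>) * exp (- pi * \<i> * \<tau>) * e2pi (- z)"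
    "exp (- pi * \<i> * \<tau>) * e2pi (- z) * e2pi z = exp (- pi * \<i> * \<tau>)"
    unfolding e2pi_def exp_add[symmetric] by (simp_all add: algebra_simps)
  then have factor: "exp (- pi * \<i> * \<tau>) * (1 - e2pi (- z)) = exp (pi * \<i> * (1 - \<tau> - 2 * z)) * (1 - e2pi z)"
    by (simp add: algebra_simps)
  have arg: "\<tau> - (z + \<tau>) = - z" by simp
  have ex: "exp (- pi * \<i> * (z + \<tau>)) = exp (- pi * \<i> * z) * exp (- pi * \<i> * \<tau>)"
    by (simp add: exp_add[symmetric] algebra_simps)
  have "theta (z + \<tau>) \<tau> = C * (exp (- pi * \<i> * \<tau>) * (1 - e2pi (- z)))"
    unfolding theta_eq_qprod arg ex Qmz C_def by (simp add: ac_simps)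
  also have "\<dots> = exp (pi * \<i> * (1 - \<tau> - 2 * z)) * (C * (1 - e2pi z))"
    unfolding factor by (simp add: ac_simps)
  also have "C * (1 - e2pi z) = theta z \<tau>"
    unfolding theta_eq_qprod qprod_shift[OF assms] C_def by (simp add: ac_simps)
  finally show ?thesis .
qed

lemma theta_plus_int_tau:
  assumes "Im \<tau> > 0" "z \<notin> lattice \<tau>"
  shows "theta (z + of_int m * \<tau>) \<tau> = exp (pi * \<i> * of_int m * (1 - of_int m * \<tau> - 2 * z)) * theta z \<tau>"
proof -
  define E where "E k = pi * \<i> * of_int k * (1 - of_int k * \<tau> - 2 * z)" for k :: int
  define A where "A k = pi * \<i> * (1 - \<tau> - 2 * (z + of_int k * \<tau>))" for k :: int
  have step: "theta (z + of_int (k + 1) * \<tau>) \<tau> = exp (A k) * theta (z + of_int k * \<tau>) \<tau>" for k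
  proof -
    have "z + of_int k * \<tau> \<notin> lattice \<tau>"
      using assms(2) by (simp only: add_int_tau_mem_lattice_iff not_False_eq_True)
    moreover have "z + of_int (k + 1) * \<tau> = (z + of_int k * \<tau>) + \<tau>" by (simp add: algebra_simps)
    ultimately show ?thesis unfolding A_def by (simp only: theta_plus_tau[OF assms(1)] not_False_eq_True)
  qed
  have "theta (z + of_int m * \<tau>) \<tau> = exp (E m) * theta z \<tau>"
  proof (induction m rule: int_induct[where k = 0])
    case base
    show ?case by (simp add: E_def)
  next
    case (step1 k)
    have "A k + E k = E (k + 1)" unfolding A_def E_def by (simp add: algebra_simps)
    then have "exp (A k) * exp (E k) = exp (E (k + 1))" by (simp only: exp_add[symmetric])
    then show ?case by (simp only: step step1.IH mult.assoc[symmetric])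
  next
    case (step2 k)
    have "A (k - 1) + E (k - 1) = E k" unfolding A_def E_def by (simp add: algebra_simps)
    then have split: "exp (E k) = exp (A (k - 1)) * exp (E (k - 1))" by (simp only: exp_add[symmetric])
    have "theta (z + of_int k * \<tau>) \<tau> = exp (A (k - 1)) * theta (z + of_int (k - 1) * \<tau>) \<tau>"
      using step[of "k - 1"] by simp
    then have "exp (A (k - 1)) * theta (z + of_int (k - 1) * \<tau>) \<tau> = exp (A (k - 1)) * (exp (E (k - 1)) * theta z \<tau>)"
      by (simp only: step2.IH split mult.assoc)
    then show ?case by simp
  qed
  then show ?thesis unfolding E_def .
qed

definition mu_lead :: "complex \<Rightarrow> complex \<Rightarrow> complex \<Rightarrow> int \<Rightarrow> complex" where
  "mu_lead u\<^sub>0 \<beta> \<tau> m =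
     exp (pi * \<i> * u\<^sub>0) * qprod \<tau> (u\<^sub>0 + (\<beta> + of_int m) * \<tau>) / qprod \<tau> (u\<^sub>0 + of_int m * \<tau>)"

definition mu_factor :: "complex \<Rightarrow> complex \<Rightarrow> int \<Rightarrow> complex" where
  "mu_factor u \<tau> k =
     (-1) powi k * exp (- 2 * pi * \<i> * of_int k * u) * qpow \<tau> (of_int (k * (k + 1)) / 2) / theta u \<tau>"

definition mu_summand :: "nat \<Rightarrow> (nat \<Rightarrow> complex) \<Rightarrow> complex \<Rightarrow> complex \<Rightarrow> (nat \<Rightarrow> int) \<Rightarrow> complex" where
  "mu_summand N u \<beta> \<tau> n = mu_lead (u 0) \<beta> \<tau> (\<Sum>j=1..N. n j) * (\<Prod>j=1..N. mu_factor (u j) \<tau> (n j))"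

lemma muhat_eq:
  "muhat N u \<beta> \<tau> =
     exp (pi * \<i> * (\<beta> - 1) * (\<Sum>j\<le>N. u j)) * (\<Sum>\<^sub>\<infinity>n\<in>intvecs N. mu_summand N u \<beta> \<tau> n)"
  unfolding muhat_def mu_summand_def mu_lead_def mu_factor_def qprod_def exp_times_qpow nome_eq_e2pi
  by simp

lemma mu_factor_reflect:
  assumes "Im \<tau> > 0" "u \<notin> lattice \<tau>" "u + \<alpha> * \<tau> \<notin> lattice \<tau>"
  shows "mu_factor (- \<alpha> * \<tau> - u) \<tau> (- k) =
     - theta u \<tau> / theta (u + \<alpha> * \<tau>) \<tau> * e2pi (- (\<alpha> + 1) * of_int k * \<tau>) * mu_factor u \<tau> k"
proof -
  have "- \<alpha> * \<tau> - u = - (u + \<alpha> * \<tau>)" by simp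
  then have th: "theta (- \<alpha> * \<tau> - u) \<tau> = - theta (u + \<alpha> * \<tau>) \<tau>"
    by (simp only: theta_minus[OF assms(1,3)])
  have ex: "exp (- 2 * pi * \<i> * of_int (- k) * (- \<alpha> * \<tau> - u)) * qpow \<tau> (of_int (- k * (- k + 1)) / 2)
      = exp (- 2 * pi * \<i> * of_int k * u) * qpow \<tau> (of_int (k * (k + 1)) / 2) * e2pi (- (\<alpha> + 1) * of_int k * \<tau>)"
    unfolding qpow_def e2pi_def exp_add[symmetric]
    by (rule arg_cong[where f = exp]) (simp add: field_simps)
  have "theta u \<tau> \<noteq> 0" "theta (u + \<alpha> * \<tau>) \<tau> \<noteq> 0"
    using theta_nonzero[OF assms(1)] assms(2,3) by auto
  then show ?thesis
    unfolding mu_factor_def power_int_minus_one_minus th mult.assoc[of "(-1) powi k"] ex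
    by (simp add: field_simps)
qed

lemma mu_lead_reflect:
  assumes \<tau>: "Im \<tau> > 0" and u: "u \<notin> lattice \<tau>" and w: "u + \<alpha> * \<tau> \<notin> lattice \<tau>"
  shows "mu_lead (- \<alpha> * \<tau> - u) (\<alpha> + 1) \<tau> (- m) * e2pi (- (\<alpha> + 1) * of_int m * \<tau>)
       = - theta u \<tau> / theta (u + \<alpha> * \<tau>) \<tau> * mu_lead u (\<alpha> + 1) \<tau> m"
proof -
  define w where "w = u + \<alpha> * \<tau>"
  define a where "a = u + of_int m * \<tau>"
  define b where "b = w + of_int (m + 1) * \<tau>"
  define K where "K = - \<i> * qpow \<tau> (1/8) * qprod \<tau> \<tau>"
  define Ea where "Ea = exp (pi * \<i> * of_int m * (1 - of_int m * \<tau> - 2 * u))"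
  define Eb where "Eb = exp (pi * \<i> * of_int (m + 1) * (1 - of_int (m + 1) * \<tau> - 2 * w))"
  have wl: "w \<notin> lattice \<tau>" using w by (simp add: w_def)
  have al: "a \<notin> lattice \<tau>" and bl: "b \<notin> lattice \<tau>"
    unfolding a_def b_def using u wl by (simp_all only: add_int_tau_mem_lattice_iff not_False_eq_True)
  have nz: "K \<noteq> 0" "qprod \<tau> a \<noteq> 0" "qprod \<tau> b \<noteq> 0" "theta u \<tau> \<noteq> 0" "theta w \<tau> \<noteq> 0" "Eb \<noteq> 0"
    using qprod_self_nonzero[OF \<tau>] qprod_nonzero[OF \<tau>] theta_nonzero[OF \<tau>] al bl u wl
    by (simp_all add: K_def qpow_def Eb_def)
  have reflection: "qprod \<tau> (\<tau> - z) = theta z \<tau> / (K * exp (- pi * \<i> * z) * qprod \<tau> z)"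
    if "qprod \<tau> z \<noteq> 0" for z
    using that nz(1) unfolding theta_eq_qprod K_def by (simp add: field_simps)
  have lead_v: "mu_lead (- \<alpha> * \<tau> - u) (\<alpha> + 1) \<tau> (- m) = exp (- pi * \<i> * w) * qprod \<tau> (\<tau> - a) / qprod \<tau> (\<tau> - b)"
  proof -
    have "- \<alpha> * \<tau> - u + (\<alpha> + 1 + of_int (- m)) * \<tau> = \<tau> - a"
      "- \<alpha> * \<tau> - u + of_int (- m) * \<tau> = \<tau> - b"
      "pi * \<i> * (- \<alpha> * \<tau> - u) = - pi * \<i> * w"
      unfolding a_def b_def w_def by (simp_all add: algebra_simps)
    then show ?thesis unfolding mu_lead_def by simp
  qed
  have lead_u: "mu_lead u (\<alpha> + 1) \<tau> m = exp (pi * \<i> * u) * qprod \<tau> b / qprod \<tau> a"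
  proof -
    have "u + (\<alpha> + 1 + of_int m) * \<tau> = b" unfolding b_def w_def by (simp add: algebra_simps)
    then show ?thesis unfolding mu_lead_def a_def by simp
  qed
  have theta_a: "theta a \<tau> = Ea * theta u \<tau>"
    unfolding a_def Ea_def by (rule theta_plus_int_tau[OF \<tau> u])
  have theta_b: "theta b \<tau> = Eb * theta w \<tau>"
    unfolding b_def Eb_def by (rule theta_plus_int_tau[OF \<tau> wl])
  \<comment> \<open>the sign on the right is exp (- pi i); with it the two exponents agree exactly\<close>
  have exponents: "exp (- pi * \<i> * w) * Ea * exp (- pi * \<i> * b) * e2pi (- (\<alpha> + 1) * of_int m * \<tau>)
      = - exp (pi * \<i> * u) * Eb * exp (- pi * \<i> * a)"
  proof -
    have "- exp (pi * \<i> * u) = exp (- pi * \<i>) * exp (pi * \<i> * u)"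
      by (simp add: exp_minus)
    then show ?thesis
      unfolding Ea_def Eb_def e2pi_def exp_add[symmetric] a_def b_def w_def
      by (simp only: exp_add[symmetric]) (rule arg_cong[where f = exp], simp add: algebra_simps)
  qed
  have "mu_lead (- \<alpha> * \<tau> - u) (\<alpha> + 1) \<tau> (- m) * e2pi (- (\<alpha> + 1) * of_int m * \<tau>)
      = exp (- pi * \<i> * w) * Ea * exp (- pi * \<i> * b) * e2pi (- (\<alpha> + 1) * of_int m * \<tau>) /
        (Eb * exp (- pi * \<i> * a)) * (theta u \<tau> * qprod \<tau> b / (theta w \<tau> * qprod \<tau> a))"
    unfolding lead_v reflection[OF nz(2)] reflection[OF nz(3)] theta_a theta_b
    using nz by (simp add: field_simps)
  also have "\<dots> = - theta u \<tau> / theta w \<tau> * (exp (pi * \<i> * u) * qprod \<tau> b / qprod \<tau> a)"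
    unfolding exponents using nz by (simp add: field_simps)
  finally show ?thesis unfolding lead_u w_def .
qed

lemma mu_summand_reflect:
  fixes N :: nat and u :: "nat \<Rightarrow> complex" and n :: "nat \<Rightarrow> int"
  assumes "Im \<tau> > 0" "\<forall>j\<le>N. u j \<notin> lattice \<tau> \<and> u j + \<alpha> * \<tau> \<notin> lattice \<tau>"
  shows "mu_summand N (\<lambda>j. - \<alpha> * \<tau> - u j) (\<alpha> + 1) \<tau> (- n)
       = (\<Prod>j\<le>N. - theta (u j) \<tau> / theta (u j + \<alpha> * \<tau>) \<tau>) * mu_summand N u (\<alpha> + 1) \<tau> n"
proof -
  define m where "m = (\<Sum>j=1..N. n j)"
  define c where "c j = - theta (u j) \<tau> / theta (u j + \<alpha> * \<tau>) \<tau>" for j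
  define e where "e k = e2pi (- (\<alpha> + 1) * of_int k * \<tau>)" for k
  have sum_neg: "(\<Sum>j=1..N. (- n) j) = - m" unfolding m_def by (simp add: sum_negf)
  have "(\<Prod>j=1..N. e (n j)) = e m"
    unfolding e_def m_def e2pi_sum[symmetric] of_int_sum by (simp add: sum_distrib_left sum_distrib_right)
  moreover have "(\<Prod>j=1..N. mu_factor (- \<alpha> * \<tau> - u j) \<tau> ((- n) j))
      = (\<Prod>j=1..N. c j * e (n j) * mu_factor (u j) \<tau> (n j))"
  proof (rule prod.cong[OF refl])
    fix j assume "j \<in> {1..N}"
    then show "mu_factor (- \<alpha> * \<tau> - u j) \<tau> ((- n) j) = c j * e (n j) * mu_factor (u j) \<tau> (n j)"
      using assms(2) unfolding uminus_apply c_def e_def by (intro mu_factor_reflect[OF assms(1)]) auto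
  qed
  ultimately have factors: "(\<Prod>j=1..N. mu_factor (- \<alpha> * \<tau> - u j) \<tau> ((- n) j))
      = (\<Prod>j=1..N. c j) * e m * (\<Prod>j=1..N. mu_factor (u j) \<tau> (n j))"
    by (simp only: prod.distrib)
  have lead: "mu_lead (- \<alpha> * \<tau> - u 0) (\<alpha> + 1) \<tau> (- m) * e m = c 0 * mu_lead (u 0) (\<alpha> + 1) \<tau> m"
    using assms(2)[rule_format, of 0] unfolding c_def e_def by (intro mu_lead_reflect[OF assms(1)]) auto
  have "(\<Prod>j\<le>N. c j) = c 0 * (\<Prod>j=1..N. c j)"
    by (simp add: atMost_atLeast0 prod.atLeast_Suc_atMost)
  then show ?thesis
    unfolding mu_summand_def sum_neg factors c_def[symmetric] m_def[symmetric] using lead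
    by (simp add: ac_simps)
qed

lemma infsum_intvecs_uminus: "(\<Sum>\<^sub>\<infinity>n\<in>intvecs N. f (- n)) = (\<Sum>\<^sub>\<infinity>n\<in>intvecs N. f n)"
  by (rule infsum_reindex_bij_betw, rule bij_betwI[where g = uminus]) (auto simp: intvecs_def)

lemma infsum_mu_summand_reflect:
  fixes u :: "nat \<Rightarrow> complex"
  assumes "Im \<tau> > 0" "\<forall>j\<le>N. u j \<notin> lattice \<tau> \<and> u j + \<alpha> * \<tau> \<notin> lattice \<tau>"
  shows "(\<Sum>\<^sub>\<infinity>n\<in>intvecs N. mu_summand N (\<lambda>j. - \<alpha> * \<tau> - u j) (\<alpha> + 1) \<tau> n)
       = (\<Prod>j\<le>N. - theta (u j) \<tau> / theta (u j + \<alpha> * \<tau>) \<tau>) *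
         (\<Sum>\<^sub>\<infinity>n\<in>intvecs N. mu_summand N u (\<alpha> + 1) \<tau> n)"
proof -
  have "(\<Sum>\<^sub>\<infinity>n\<in>intvecs N. mu_summand N (\<lambda>j. - \<alpha> * \<tau> - u j) (\<alpha> + 1) \<tau> n)
      = (\<Sum>\<^sub>\<infinity>n\<in>intvecs N. mu_summand N (\<lambda>j. - \<alpha> * \<tau> - u j) (\<alpha> + 1) \<tau> (- n))"
    by (rule infsum_intvecs_uminus[symmetric])
  also have "\<dots> = (\<Sum>\<^sub>\<infinity>n\<in>intvecs N.
      (\<Prod>j\<le>N. - theta (u j) \<tau> / theta (u j + \<alpha> * \<tau>) \<tau>) * mu_summand N u (\<alpha> + 1) \<tau> n)"
    by (rule infsum_cong, rule mu_summand_reflect[OF assms])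
  finally show ?thesis by (simp only: infsum_cmult_right')
qed

lemma prod_neg_divide:
  fixes f g :: "nat \<Rightarrow> 'a :: field"
  shows "(\<Prod>j\<le>N. - f j / g j) = (-1) ^ (N + 1) * (\<Prod>j\<le>N. f j) / (\<Prod>j\<le>N. g j)"
proof -
  have "(\<Prod>j\<le>N. - f j / g j) = (\<Prod>j\<le>N. (-1) * (f j / g j))" by simp
  then show ?thesis
    unfolding prod.distrib prod_constant prod_dividef card_atMost Suc_eq_plus1 by simp
qed

theorem theorem1p1:
  fixes N :: nat and \<alpha> \<tau> :: complex and u :: "nat \<Rightarrow> complex"
  assumes "Im \<tau> > 0" and "N \<ge> 1"
    and "\<forall>j\<le>N. u j \<notin> lattice \<tau> \<and> u j + \<alpha> * \<tau> \<notin> lattice \<tau>"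
  shows "exp (2 * pi * \<i> * \<alpha> * (\<Sum>j\<le>N. u j)) * exp (pi * \<i> * \<alpha>^2 * of_nat (N + 1) * \<tau>) *
           muhat N (\<lambda>j. - \<alpha> * \<tau> - u j) (\<alpha> + 1) \<tau>
         = (-1) ^ (N + 1) * (\<Prod>j\<le>N. theta (u j) \<tau>) / (\<Prod>j\<le>N. theta (u j + \<alpha> * \<tau>) \<tau>) *
           muhat N u (\<alpha> + 1) \<tau>"
proof -
  define K where "K = (\<Prod>j\<le>N. - theta (u j) \<tau> / theta (u j + \<alpha> * \<tau>) \<tau>)"
  define E where "E = exp (2 * pi * \<i> * \<alpha> * (\<Sum>j\<le>N. u j)) * exp (pi * \<i> * \<alpha>^2 * of_nat (N + 1) * \<tau>)"
  have prefactor: "E * exp (pi * \<i> * (\<alpha> + 1 - 1) * (\<Sum>j\<le>N. - \<alpha> * \<tau> - u j))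
      = exp (pi * \<i> * (\<alpha> + 1 - 1) * (\<Sum>j\<le>N. u j))"
    unfolding E_def exp_add[symmetric]
    by (rule arg_cong[where f = exp]) (simp add: sum_subtractf algebra_simps power2_eq_square)
  have "E * muhat N (\<lambda>j. - \<alpha> * \<tau> - u j) (\<alpha> + 1) \<tau>
      = K * (E * exp (pi * \<i> * (\<alpha> + 1 - 1) * (\<Sum>j\<le>N. - \<alpha> * \<tau> - u j)) *
             (\<Sum>\<^sub>\<infinity>n\<in>intvecs N. mu_summand N u (\<alpha> + 1) \<tau> n))"
    unfolding muhat_eq infsum_mu_summand_reflect[OF assms(1,3)] K_def by (simp only: ac_simps)
  also have "\<dots> = K * muhat N u (\<alpha> + 1) \<tau>"
    unfolding prefactor muhat_eq ..
  finally show ?thesis unfolding E_def K_def prod_neg_divide .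
qed

end
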